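(* For even $m\ge 18$, let $G^{\mathrm{dist}}_m$ be the graph with vertex set $\{u^*\}\cup A\cup\{z_1,z_2,x,y\}\cup L$, where $A=\{a_1,a_2,a_3,a_4\}$ induces a $K_4$, $|L|=m-15$, $u^*$ is adjacent to every vertex of $A\cup\{z_1,z_2\}\cup L$, and the remaining edges are exactly $z_1x$, $z_2y$, $xy$ (so $G^{\mathrm{dist}}_m$ has $m$ edges). Its spectral radius equals the largest root of \[ f_{\mathrm{dist}}(x)=x^5-4x^4+(11-m)x^3+(4m-45)x^2+(28-2m)x+45-3m, \] and $\rho(G^{\mathrm{dist}}_m)<\rho'(m)$.
   Context: $\rho(G)$ denotes the adjacency spectral radius. For even $m$, $\rho'(m)$ is the largest real root of $p_m(x)=x^4-mx^2-(m-2)x+\frac{m}{2}-1$. *)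

theory Defs
  imports "Jordan_Normal_Form.Spectral_Radius"
begin

text \<open>A finite simple graph on vertex set {0..<n}, given by a symmetric irreflexive
  adjacency predicate.\<close>

definition adj_matrix :: "nat \<Rightarrow> (nat \<Rightarrow> nat \<Rightarrow> bool) \<Rightarrow> complex mat" where
  "adj_matrix n E = mat n n (\<lambda>(i, j). if E i j then 1 else 0)"

definition graph_spectral_radius :: "nat \<Rightarrow> (nat \<Rightarrow> nat \<Rightarrow> bool) \<Rightarrow> real" where
  "graph_spectral_radius n E = spectral_radius (adj_matrix n E)"

definition largest_real_root :: "real poly \<Rightarrow> real" where
  "largest_real_root p = Max {x. poly p x = 0}"

definition p_poly :: "nat \<Rightarrow> real poly" where
  "p_poly m = [: real m / 2 - 1, - (real m - 2), - real m, 0, 1 :]"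

definition rho' :: "nat \<Rightarrow> real" where
  "rho' m = largest_real_root (p_poly m)"

definition f_dist :: "nat \<Rightarrow> real poly" where
  "f_dist m = [: 45 - 3 * real m, 28 - 2 * real m, 4 * real m - 45, 11 - real m, -4, 1 :]"

text \<open>The graph G^dist_m on vertices {0..<m-6}:
  0 = u*, 1..4 = a_1..a_4 (the K_4 A), 5 = z_1, 6 = z_2, 7 = x, 8 = y,
  9..m-7 = L (so |L| = m-15).\<close>
definition dist_num_vertices :: "nat \<Rightarrow> nat" where
  "dist_num_vertices m = m - 6"

definition dist_edge0 :: "nat \<Rightarrow> nat \<Rightarrow> nat \<Rightarrow> bool" where
  "dist_edge0 m i j \<longleftrightarrow>
     (i = 0 \<and> ((1 \<le> j \<and> j \<le> 6) \<or> (9 \<le> j \<and> j < dist_num_vertices m)))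
   \<or> (1 \<le> i \<and> i < j \<and> j \<le> 4)
   \<or> (i = 5 \<and> j = 7) \<or> (i = 6 \<and> j = 8) \<or> (i = 7 \<and> j = 8)"

definition dist_adj :: "nat \<Rightarrow> nat \<Rightarrow> nat \<Rightarrow> bool" where
  "dist_adj m i j \<longleftrightarrow> dist_edge0 m i j \<or> dist_edge0 m j i"

end

theory Submission
  imports Defs
begin

text \<open>If a graph admits a positive vector w with A w = r w, then r is its spectral radius: r is
  an eigenvalue, and comparing any eigenvector x with w at a coordinate where |x_i| / w_i is
  maximal bounds every eigenvalue by r. For G^dist_m take r the largest root of f_dist and give
  equal weights to the vertices of A, of {z_1, z_2}, of {x, y} and of L; the eigen-equations at
  these classes determine the weights, and the one at u* is f_dist(r) = 0 after clearing
  denominators. Since f_dist(21/5) < 0 we have r > 21/5, and there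
  2 p_m(r) (r - 3) (r^2 - r - 1) = - D(r) for a sextic D that is positive on [21/5, \<infinity>);
  hence p_m(r) < 0 and r < rho'(m).\<close>

lemma adj_matrix_carrier: "adj_matrix n E \<in> carrier_mat n n"
  by (simp add: adj_matrix_def)

lemma adj_matrix_mult_vec_nth:
  assumes "i < n" and "x \<in> carrier_vec n"
  shows "(adj_matrix n E *\<^sub>v x) $ i = (\<Sum>j<n. if E i j then x $ j else 0)"
  using assms
  by (auto simp: adj_matrix_def mult_mat_vec_def scalar_prod_def lessThan_atLeast0 intro!: sum.cong)

lemma adj_matrix_eigenvector_of_positive:
  fixes w :: "nat \<Rightarrow> real"
  assumes "n > 0"
    and w_pos: "\<And>i. i < n \<Longrightarrow> w i > 0"
    and eq: "\<And>i. i < n \<Longrightarrow> (\<Sum>j<n. if E i j then w j else 0) = r * w i"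
  shows "eigenvector (adj_matrix n E) (vec n (\<lambda>j. complex_of_real (w j))) (complex_of_real r)"
proof -
  let ?v = "vec n (\<lambda>j. complex_of_real (w j))"
  have "?v $ 0 \<noteq> 0"
    using assms(1) w_pos[OF assms(1)] by simp
  then have "?v \<noteq> 0\<^sub>v n"
    using assms(1) by (auto dest: arg_cong[where f = "\<lambda>v. v $ 0"])
  moreover have "adj_matrix n E *\<^sub>v ?v = complex_of_real r \<cdot>\<^sub>v ?v"
  proof (rule eq_vecI)
    fix i
    assume "i < dim_vec (complex_of_real r \<cdot>\<^sub>v ?v)"
    then have i: "i < n" by simp
    have "(adj_matrix n E *\<^sub>v ?v) $ i = complex_of_real (\<Sum>j<n. if E i j then w j else 0)"
      using i by (simp add: adj_matrix_mult_vec_nth if_distrib cong: if_cong)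
    then show "(adj_matrix n E *\<^sub>v ?v) $ i = (complex_of_real r \<cdot>\<^sub>v ?v) $ i"
      using eq[OF i] i by simp
  qed (simp add: adj_matrix_def)
  ultimately show ?thesis
    by (simp add: eigenvector_def adj_matrix_def)
qed

lemma adj_matrix_eigenvalue_norm_le:
  fixes w :: "nat \<Rightarrow> real"
  assumes w_pos: "\<And>i. i < n \<Longrightarrow> w i > 0"
    and eq: "\<And>i. i < n \<Longrightarrow> (\<Sum>j<n. if E i j then w j else 0) = r * w i"
    and "eigenvalue (adj_matrix n E) ev"
  shows "norm ev \<le> r"
proof -
  obtain x where "eigenvector (adj_matrix n E) x ev"
    using assms(3) unfolding eigenvalue_def by blast
  then have x: "x \<in> carrier_vec n" "x \<noteq> 0\<^sub>v n" "adj_matrix n E *\<^sub>v x = ev \<cdot>\<^sub>v x"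
    unfolding eigenvector_def by (auto simp: adj_matrix_def)
  obtain k where k: "k < n" "x $ k \<noteq> 0"
  proof (rule ccontr)
    assume "\<not> thesis"
    then have "x = 0\<^sub>v n"
      using that x(1) by (intro eq_vecI) auto
    then show False
      using x(2) by simp
  qed
  define q where "q j = cmod (x $ j) / w j" for j
  have fin: "finite (q ` {..<n})" and ne: "q ` {..<n} \<noteq> {}"
    using k(1) by auto
  obtain i where i: "i < n" and q_i: "q i = Max (q ` {..<n})"
    using Max_in[OF fin ne] by auto
  have q_max: "q j \<le> q i" if "j < n" for j
    using Max_ge[OF fin] that q_i by auto
  have x_le: "cmod (x $ j) \<le> q i * w j" if "j < n" for j
    using q_max[OF that] w_pos[OF that] by (simp add: q_def field_simps)
  have "0 < q k"
    using k w_pos by (simp add: q_def)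
  then have "0 < q i"
    using q_max[OF k(1)] by linarith
  then have x_i_pos: "0 < cmod (x $ i)"
    using w_pos[OF i] by (simp add: q_def zero_less_divide_iff)
  have "ev * x $ i = (\<Sum>j<n. if E i j then x $ j else 0)"
    using adj_matrix_mult_vec_nth[OF i x(1), of E] x(3) i x(1) by simp
  then have "cmod ev * cmod (x $ i) = cmod (\<Sum>j<n. if E i j then x $ j else 0)"
    by (metis norm_mult)
  also have "\<dots> \<le> (\<Sum>j<n. if E i j then q i * w j else 0)"
    by (rule order_trans[OF norm_sum sum_mono]) (auto simp: x_le)
  also have "\<dots> = q i * (r * w i)"
    by (simp add: eq[OF i, symmetric] sum_distrib_left if_distrib cong: if_cong)
  also have "\<dots> = r * cmod (x $ i)"
    using w_pos[OF i] by (simp add: q_def)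
  finally show ?thesis
    using x_i_pos by simp
qed

lemma graph_spectral_radius_eq_of_positive_eigenvector:
  fixes w :: "nat \<Rightarrow> real"
  assumes "n > 0"
    and w_pos: "\<And>i. i < n \<Longrightarrow> w i > 0"
    and eq: "\<And>i. i < n \<Longrightarrow> (\<Sum>j<n. if E i j then w j else 0) = r * w i"
  shows "graph_spectral_radius n E = r"
proof -
  let ?A = "adj_matrix n E"
  have "0 \<le> (\<Sum>j<n. if E 0 j then w j else 0)"
    by (intro sum_nonneg) (auto intro: less_imp_le w_pos)
  then have "0 \<le> r * w 0"
    using eq[OF assms(1)] by simp
  then have "0 \<le> r"
    using w_pos[OF assms(1)] by (simp add: zero_le_mult_iff)
  moreover have "complex_of_real r \<in> spectrum ?A"
    using adj_matrix_eigenvector_of_positive[OF assms] by (auto simp: spectrum_def eigenvalue_def)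
  ultimately have "r \<le> spectral_radius ?A"
    using spectral_radius_mem_max(2)[OF adj_matrix_carrier assms(1)] by fastforce
  moreover obtain ev where "eigenvalue ?A ev" "spectral_radius ?A = norm ev"
    using spectral_radius_mem_max(1)[OF adj_matrix_carrier assms(1)] by (auto simp: spectrum_def)
  ultimately show ?thesis
    using adj_matrix_eigenvalue_norm_le[OF w_pos eq] by (force simp: graph_spectral_radius_def)
qed

lemma largest_real_root_gt:
  fixes p :: "real poly"
  assumes "lead_coeff p > 0" and "poly p a < 0"
  shows "a < largest_real_root p" and "poly p (largest_real_root p) = 0"
proof -
  obtain b0 where b0: "\<forall>x\<ge>b0. poly p x \<ge> lead_coeff p"
    using poly_pinfty_gt_lc[OF assms(1)] by blast
  define b where "b = max b0 (a + 1)"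
  have "poly p b \<ge> lead_coeff p"
    using b0 by (simp add: b_def)
  then have "poly p b > 0"
    using assms(1) by linarith
  moreover have "a < b"
    by (simp add: b_def)
  ultimately obtain x where x: "a < x" "poly p x = 0"
    using poly_IVT_pos[OF _ assms(2)] by blast
  have fin: "finite {x. poly p x = 0}"
    using assms(1) by (intro poly_roots_finite) auto
  show "a < largest_real_root p"
    using Max_ge[OF fin] x unfolding largest_real_root_def by fastforce
  show "poly p (largest_real_root p) = 0"
    using Max_in[OF fin] x unfolding largest_real_root_def by blast
qed

lemma sq_minus_self_minus_one_pos:
  fixes x :: real
  assumes "x \<ge> 2"
  shows "x\<^sup>2 - x - 1 > 0"
proof -
  have "2 * x \<le> x * x"
    using assms by (intro mult_right_mono) auto
  then show ?thesis
    using assms unfolding power2_eq_square by linarith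
qed

lemma dist_neighbour_sum:
  fixes w :: "nat \<Rightarrow> real"
  assumes "m \<ge> 18" and "i < dist_num_vertices m"
  shows "(\<Sum>j<dist_num_vertices m. if dist_adj m i j then w j else 0) =
    (if i = 0 then w 1 + w 2 + w 3 + w 4 + w 5 + w 6 + (\<Sum>j = 9..<m - 6. w j)
     else if i \<le> 4 then w 0 + w 1 + w 2 + w 3 + w 4 - w i
     else if i = 5 then w 0 + w 7 else if i = 6 then w 0 + w 8
     else if i = 7 then w 5 + w 8 else if i = 8 then w 6 + w 7 else w 0)"
proof -
  let ?g = "\<lambda>j. if dist_adj m i j then w j else 0"
  have "{..<dist_num_vertices m} = {..<9} \<union> {9..<m - 6}"
    using assms(1) by (auto simp: dist_num_vertices_def)
  then have "sum ?g {..<dist_num_vertices m} = sum ?g {..<9} + sum ?g {9..<m - 6}"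
    by (simp add: sum.union_disjoint[symmetric] ivl_disj_int)
  moreover have "sum ?g {9..<m - 6} = (if i = 0 then (\<Sum>j = 9..<m - 6. w j) else 0)"
    by (cases "i = 0")
      (auto simp: dist_adj_def dist_edge0_def dist_num_vertices_def intro!: sum.cong sum.neutral)
  moreover have "sum ?g {..<9} = (if i = 0 then w 1 + w 2 + w 3 + w 4 + w 5 + w 6
     else if i \<le> 4 then w 0 + w 1 + w 2 + w 3 + w 4 - w i
     else if i = 5 then w 0 + w 7 else if i = 6 then w 0 + w 8
     else if i = 7 then w 5 + w 8 else if i = 8 then w 6 + w 7 else w 0)"
  proof -
    consider "i = 0" | "i = 1" | "i = 2" | "i = 3" | "i = 4" | "i = 5" | "i = 6" | "i = 7" | "i = 8"
      | "i \<ge> 9"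
      by linarith
    then show ?thesis
      by cases (use assms in \<open>auto simp: eval_nat_numeral dist_adj_def dist_edge0_def dist_num_vertices_def\<close>)
  qed
  ultimately show ?thesis
    by auto
qed

lemma poly_f_dist_quotient:
  assumes "m \<ge> 15"
  shows "poly (f_dist m) x = x\<^sup>2 * (x - 3) * (x\<^sup>2 - x - 1) - 4 * x * (x\<^sup>2 - x - 1)
    - 2 * x * (x - 1) * (x - 3) - real (m - 15) * (x - 3) * (x\<^sup>2 - x - 1)"
  using assms by (simp add: f_dist_def of_nat_diff eval_nat_numeral algebra_simps)

definition dist_perron_weight :: "real \<Rightarrow> nat \<Rightarrow> real" where
  "dist_perron_weight r j =
     (if j = 0 then 1 else if j \<le> 4 then 1 / (r - 3)
      else if j \<le> 6 then (r - 1) / (r\<^sup>2 - r - 1)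
      else if j \<le> 8 then 1 / (r\<^sup>2 - r - 1) else 1 / r)"

lemma dist_perron_weight_pos:
  assumes "r > 3"
  shows "dist_perron_weight r j > 0"
  using assms sq_minus_self_minus_one_pos[of r] by (simp add: dist_perron_weight_def)

lemma dist_perron_weight_eigen:
  assumes "m \<ge> 18" and "r > 3" and "poly (f_dist m) r = 0" and "i < dist_num_vertices m"
  shows "(\<Sum>j<dist_num_vertices m. if dist_adj m i j then dist_perron_weight r j else 0)
    = r * dist_perron_weight r i"
proof -
  have Q: "r\<^sup>2 - r - 1 > 0"
    using assms(2) by (intro sq_minus_self_minus_one_pos) simp
  consider "i = 0" | "1 \<le> i" "i \<le> 4" | "i = 5 \<or> i = 6" | "i = 7 \<or> i = 8" | "9 \<le> i"
    by linarith
  then show ?thesis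
  proof cases
    case 1
    have "(\<Sum>j = 9..<m - 6. dist_perron_weight r j) = real (m - 15) / r"
      using assms(1) by (simp add: dist_perron_weight_def)
    moreover have "4 / (r - 3) + 2 * ((r - 1) / (r\<^sup>2 - r - 1)) + real (m - 15) / r = r"
    proof -
      define Q where "Q = r\<^sup>2 - r - 1"
      have "4 * r * Q + 2 * r * (r - 1) * (r - 3) + real (m - 15) * (r - 3) * Q = r * r * (r - 3) * Q"
        using poly_f_dist_quotient[of m r] assms(1,3) by (simp add: Q_def power2_eq_square)
      moreover have "Q > 0"
        using Q by (simp add: Q_def)
      ultimately have "4 / (r - 3) + 2 * ((r - 1) / Q) + real (m - 15) / r = r"
        using assms(2) by (simp add: field_simps)
      then show ?thesis
        by (simp add: Q_def)
    qed
    ultimately show ?thesis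
      using 1 assms by (simp add: dist_neighbour_sum dist_perron_weight_def)
  next
    case 2
    have "1 + 3 / (r - 3) = r / (r - 3)"
      using assms(2) by (simp add: field_simps)
    with 2 assms show ?thesis
      by (simp add: dist_neighbour_sum dist_perron_weight_def)
  qed (use assms Q in \<open>auto simp: dist_neighbour_sum dist_perron_weight_def field_simps power2_eq_square\<close>)
qed

lemma f_dist_largest_root:
  assumes "m \<ge> 18"
  shows "21/5 < largest_real_root (f_dist m)"
    and "poly (f_dist m) (largest_real_root (f_dist m)) = 0"
proof -
  have "poly (f_dist m) (21/5) = 768756/3125 - 1866/125 * real m"
    by (simp add: f_dist_def field_simps)
  then have "poly (f_dist m) (21/5) < 0"
    using assms by simp
  moreover have "lead_coeff (f_dist m) > 0"
    by (simp add: f_dist_def)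
  ultimately show "21/5 < largest_real_root (f_dist m)"
    and "poly (f_dist m) (largest_real_root (f_dist m)) = 0"
    using largest_real_root_gt by blast+
qed

lemma dist_sextic_pos:
  fixes x :: real
  assumes "x \<ge> 21/5"
  shows "2*x^6 + 9*x^5 - 74*x^4 - 27*x^3 + 175*x^2 + 54*x - 39 > 0"
proof -
  \<comment> \<open>in s = 5x - 21 all coefficients are positive\<close>
  define s where "s = 5 * x - 21"
  have "s \<ge> 0"
    using assms by (simp add: s_def)
  have "15625 * (2*x^6 + 9*x^5 - 74*x^4 - 27*x^3 + 175*x^2 + 54*x - 39)
    = 15439812 + 24533412*s + 5003530*s^2 + 410115*s^3 + 16105*s^4 + 297*s^5 + 2*s^6"
    by (simp add: s_def eval_nat_numeral algebra_simps)
  also have "\<dots> > 0"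
    using \<open>s \<ge> 0\<close> by (intro add_pos_nonneg) auto
  finally show ?thesis
    by simp
qed

lemma p_poly_f_dist_identity:
  "2 * poly (p_poly m) x * ((x - 3) * (x\<^sup>2 - x - 1))
    = (2*x^2 + 2*x - 1) * poly (f_dist m) x
      - (2*x^6 + 9*x^5 - 74*x^4 - 27*x^3 + 175*x^2 + 54*x - 39)"
  by (simp add: p_poly_def f_dist_def eval_nat_numeral algebra_simps)

lemma poly_p_poly_neg_at_f_dist_root:
  assumes "poly (f_dist m) r = 0" and "r \<ge> 21/5"
  shows "poly (p_poly m) r < 0"
proof -
  have "0 < r - 3" and "0 < r\<^sup>2 - r - 1"
    using assms(2) sq_minus_self_minus_one_pos[of r] by simp_all
  moreover have "2 * poly (p_poly m) r * ((r - 3) * (r\<^sup>2 - r - 1)) < 0"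
    using p_poly_f_dist_identity[of m r] assms dist_sextic_pos by simp
  ultimately show ?thesis
    by (simp add: mult_less_0_iff)
qed

theorem proposition6p3:
  fixes m :: nat
  assumes "even m" and "m \<ge> 18"
  shows "graph_spectral_radius (dist_num_vertices m) (dist_adj m) = largest_real_root (f_dist m)
         \<and> graph_spectral_radius (dist_num_vertices m) (dist_adj m) < rho' m"
proof -
  define r where "r = largest_real_root (f_dist m)"
  have r: "21/5 < r" "poly (f_dist m) r = 0"
    using f_dist_largest_root[OF assms(2)] by (simp_all add: r_def)
  have "graph_spectral_radius (dist_num_vertices m) (dist_adj m) = r"
  proof (rule graph_spectral_radius_eq_of_positive_eigenvector)
    show "0 < dist_num_vertices m"
      using assms(2) by (simp add: dist_num_vertices_def)
  qed (use assms(2) r in \<open>auto intro: dist_perron_weight_pos dist_perron_weight_eigen\<close>)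
  moreover have "r < rho' m"
    using largest_real_root_gt(1)[OF _ poly_p_poly_neg_at_f_dist_root[OF r(2)]] r(1)
    by (simp add: rho'_def p_poly_def)
  ultimately show ?thesis
    by (simp add: r_def)
qed

end
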